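(* Let $V$ be an $n$-dimensional complex vector space with basis $e_1,\ldots,e_n$ and dual basis $e_1^*,\ldots,e_n^*$. Let $a_{ij}=e_i\otimes e_j-e_j\otimes e_i\in\Lambda_2(V)$, $b_{ij}=e_i^*\otimes e_j^*+e_j^*\otimes e_i^*\in S_2(V^* )$, $A=(a_{ij})$, $B=(b_{ij})\in\operatorname{Mat}_{n,n}(\Lambda(\Lambda_2(V)\oplus S_2(V^* )))$, let $v={}^t(v_1,\ldots,v_n)$, $w={}^t(w_1,\ldots,w_n)$ with $v_i,w_i\in\mathbb{C}$ arbitrary, and put $$Q=\sum_{\sigma\in S_{n+1}}\sum_{1\le i_1,\ldots,i_{n+1}\le n}\operatorname{sgn}(\sigma)(AB)_{i_1i_{\sigma(1)}}\cdots(AB)_{i_{n-1}i_{\sigma(n-1)}}A_{i_ni_{n+1}}w_{i_{\sigma(n)}}v_{i_{\sigma(n+1)}}.$$ Then $Q=(-1)^{n-1}\,2\,(n-1)!\,{}^tw\,A(BA)^{n-1}v$.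
   Context: $\Lambda(\Lambda_2(V)\oplus S_2(V^* ))$ is the exterior algebra on $\Lambda_2(V)\oplus S_2(V^* )$; the $a_{ij}$, $b_{ij}$ are of degree one (pairwise anticommuting), $a_{ji}=-a_{ij}$, $b_{ji}=b_{ij}$. All products of entries are taken in the order written. *)

theory Defs
  imports Complex_Main "HOL-Combinatorics.Permutations" "HOL-Library.Product_Lexorder"
begin

text \<open>Exterior algebra over the complex numbers on the generators
  a_ij (i < j), tagged True, and b_ij (i \<le> j), tagged False.
  An element is a coefficient function on finite sets of generators
  (the basis monomial of a finite set S is the product of its elements in
  increasing order). Values at infinite sets are irrelevant (always 0 for
  everything built below).\<close>

type_synonym gen = "bool \<times> nat \<times> nat"
type_synonym ext = "gen set \<Rightarrow> complex"

definition inv_sign :: "gen set \<Rightarrow> gen set \<Rightarrow> complex" where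
  "inv_sign S T = (-1) ^ card {(s, t). s \<in> S \<and> t \<in> T \<and> t < s}"

definition ext_mul :: "ext \<Rightarrow> ext \<Rightarrow> ext" (infixl "\<odot>" 70) where
  "ext_mul x y = (\<lambda>U. if finite U
      then (\<Sum>S\<in>Pow U. inv_sign S (U - S) * x S * y (U - S)) else 0)"

definition ext_add :: "ext \<Rightarrow> ext \<Rightarrow> ext" where
  "ext_add x y = (\<lambda>U. x U + y U)"

definition ext_scale :: "complex \<Rightarrow> ext \<Rightarrow> ext" where
  "ext_scale c x = (\<lambda>U. c * x U)"

definition ext_zero :: ext where
  "ext_zero = (\<lambda>U. 0)"

definition ext_one :: ext where
  "ext_one = (\<lambda>U. if U = {} then 1 else 0)"

definition ext_gen :: "gen \<Rightarrow> ext" where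
  "ext_gen g = (\<lambda>U. if U = {g} then 1 else 0)"

definition ext_sum :: "('i \<Rightarrow> ext) \<Rightarrow> 'i set \<Rightarrow> ext" where
  "ext_sum f I = (\<lambda>U. \<Sum>i\<in>I. f i U)"

definition ext_prod_list :: "ext list \<Rightarrow> ext" where
  "ext_prod_list xs = foldr ext_mul xs ext_one"

definition gen_a :: "nat \<Rightarrow> nat \<Rightarrow> ext" where
  "gen_a i j = (if i < j then ext_gen (True, i, j)
     else if j < i then ext_scale (-1) (ext_gen (True, j, i)) else ext_zero)"

definition gen_b :: "nat \<Rightarrow> nat \<Rightarrow> ext" where
  "gen_b i j = ext_gen (False, min i j, max i j)"

type_synonym emat = "nat \<Rightarrow> nat \<Rightarrow> ext"

definition mat_mul :: "nat \<Rightarrow> emat \<Rightarrow> emat \<Rightarrow> emat" where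
  "mat_mul n M N = (\<lambda>i j. ext_sum (\<lambda>k. M i k \<odot> N k j) {1..n})"

definition mat_id :: emat where
  "mat_id = (\<lambda>i j. if i = j then ext_one else ext_zero)"

fun mat_pow :: "nat \<Rightarrow> emat \<Rightarrow> nat \<Rightarrow> emat" where
  "mat_pow n M 0 = mat_id"
| "mat_pow n M (Suc k) = mat_mul n (mat_pow n M k) M"

definition bil :: "nat \<Rightarrow> (nat \<Rightarrow> complex) \<Rightarrow> emat \<Rightarrow> (nat \<Rightarrow> complex) \<Rightarrow> ext" where
  "bil n w M v = ext_sum (\<lambda>(i, j). ext_scale (w i * v j) (M i j)) ({1..n} \<times> {1..n})"

definition Qsum :: "nat \<Rightarrow> (nat \<Rightarrow> complex) \<Rightarrow> (nat \<Rightarrow> complex) \<Rightarrow> ext" where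
  "Qsum n v w =
     ext_sum (\<lambda>\<sigma>. ext_sum (\<lambda>ii.
        ext_scale (of_int (sign \<sigma>) * w (ii (\<sigma> n)) * v (ii (\<sigma> (n + 1))))
          (ext_prod_list (map (\<lambda>k. mat_mul n gen_a gen_b (ii k) (ii (\<sigma> k))) [1..<n])
           \<odot> gen_a (ii n) (ii (n + 1))))
       (PiE {1..n+1} (\<lambda>_. {1..n})))
     {\<sigma>. \<sigma> permutes {1..n+1}}"

end

theory Submission
  imports Defs
begin

text \<open>Both sides vanish.
  On the left, each index map \<open>i\<close> from the \<open>n + 1\<close> positions to \<open>{1..n}\<close> takes some value
  twice, and composing \<open>\<sigma>\<close> with the transposition of these two positions cancels the terms
  in pairs. On the right, the entries of \<open>A\<close> and \<open>B\<close> are odd and those of \<open>AB\<close> even, hence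
  central; from \<open>\<^sup>tA = -A\<close> and \<open>\<^sup>tB = B\<close> one gets \<open>\<^sup>t(AB) = BA\<close>, so \<open>A (BA)\<^sup>N\<close> is
  antisymmetric and \<open>tr (AB)\<^sup>k = 0\<close> for \<open>k > 0\<close>. Weighting the positions of \<open>Q\<close> with powers of
  \<open>AB\<close> and summing out one position at a time (the permutations fixing it produce a trace,
  the others merge two factors at the cost of a sign) evaluates the weighted sum as a nonzero
  multiple of \<open>\<^sup>tw A (BA)\<^sup>n\<^sup>-\<^sup>1 v\<close>; but the weighted sum also vanishes by the pairing
  argument.\<close>

section \<open>The exterior algebra as a ring\<close>

definition ext_finite :: "ext \<Rightarrow> bool" where
  "ext_finite x \<longleftrightarrow> (\<forall>U. infinite U \<longrightarrow> x U = 0)"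

lemma inv_sign_empty_left [simp]: "inv_sign {} T = 1"
  and inv_sign_empty_right [simp]: "inv_sign S {} = 1"
  by (simp_all add: inv_sign_def)

lemma inv_sign_Un_left:
  assumes "finite S" "finite S'" "finite T" "S \<inter> S' = {}"
  shows "inv_sign (S \<union> S') T = inv_sign S T * inv_sign S' T"
proof -
  let ?X = "{(s, t). s \<in> S \<and> t \<in> T \<and> t < s}"
  let ?Y = "{(s, t). s \<in> S' \<and> t \<in> T \<and> t < s}"
  have "{(s, t). s \<in> S \<union> S' \<and> t \<in> T \<and> t < s} = ?X \<union> ?Y" by auto
  moreover have "finite ?X" "finite ?Y"
    by (rule finite_subset[of _ "S \<times> T"] finite_subset[of _ "S' \<times> T"]; use assms in auto)+
  moreover have "?X \<inter> ?Y = {}" using assms(4) by auto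
  ultimately show ?thesis by (simp add: inv_sign_def card_Un_disjoint power_add)
qed

lemma inv_sign_Un_right:
  assumes "finite S" "finite T" "finite T'" "T \<inter> T' = {}"
  shows "inv_sign S (T \<union> T') = inv_sign S T * inv_sign S T'"
proof -
  let ?X = "{(s, t). s \<in> S \<and> t \<in> T \<and> t < s}"
  let ?Y = "{(s, t). s \<in> S \<and> t \<in> T' \<and> t < s}"
  have "{(s, t). s \<in> S \<and> t \<in> T \<union> T' \<and> t < s} = ?X \<union> ?Y" by auto
  moreover have "finite ?X" "finite ?Y"
    by (rule finite_subset[of _ "S \<times> T"] finite_subset[of _ "S \<times> T'"]; use assms in auto)+
  moreover have "?X \<inter> ?Y = {}" using assms(4) by auto
  ultimately show ?thesis by (simp add: inv_sign_def card_Un_disjoint power_add)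
qed

lemma inv_sign_swap:
  assumes "finite S" "finite T" "S \<inter> T = {}"
  shows "inv_sign S T = (-1) ^ (card S * card T) * inv_sign T S"
proof -
  let ?X = "{(s, t). s \<in> S \<and> t \<in> T \<and> t < s}"
  let ?Y = "{(t, s). t \<in> T \<and> s \<in> S \<and> s < t}"
  let ?Y' = "{(s, t). s \<in> S \<and> t \<in> T \<and> s < t}"
  have fin: "finite ?X" "finite ?Y'"
    by (rule finite_subset[of _ "S \<times> T"]; use assms in auto)+
  have "?Y = prod.swap ` ?Y'" by auto
  then have card_Y: "card ?Y = card ?Y'" by (simp add: card_image)
  have "(s, t) \<in> ?X \<union> ?Y'" if "s \<in> S" "t \<in> T" for s t
    using that assms(3) by (cases s t rule: linorder_cases) auto
  then have "?X \<union> ?Y' = S \<times> T" by blast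
  moreover have "?X \<inter> ?Y' = {}" by auto
  ultimately have "card ?X + card ?Y = card S * card T"
    using card_Un_disjoint[OF fin] card_Y by (simp add: card_cartesian_product)
  then have "inv_sign S T * inv_sign T S = (-1) ^ (card S * card T)"
    unfolding inv_sign_def power_add[symmetric] by simp
  then have "inv_sign S T * (inv_sign T S * inv_sign T S) = (-1) ^ (card S * card T) * inv_sign T S"
    by (metis mult.assoc)
  moreover have "inv_sign T S * inv_sign T S = 1"
    unfolding inv_sign_def power_add[symmetric] by simp
  ultimately show ?thesis by simp
qed

lemma ext_mul_finite:
  "finite U \<Longrightarrow> (x \<odot> y) U = (\<Sum>S\<in>Pow U. inv_sign S (U - S) * x S * y (U - S))"
  by (simp add: ext_mul_def)

lemma ext_mul_finite_compl:
  assumes "finite U"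
  shows "(y \<odot> x) U = (\<Sum>S\<in>Pow U. inv_sign (U - S) S * y (U - S) * x S)"
proof -
  have "bij_betw (\<lambda>S. U - S) (Pow U) (Pow U)"
    by (rule bij_betw_byWitness[where f'="\<lambda>S. U - S"]) auto
  then have "(y \<odot> x) U = (\<Sum>S\<in>Pow U. inv_sign (U - S) (U - (U - S)) * y (U - S) * x (U - (U - S)))"
    unfolding ext_mul_finite[OF assms] by (rule sum.reindex_bij_betw[symmetric])
  then show ?thesis
    by (simp add: double_diff)
qed

lemma ext_finite_ext_mul: "ext_finite (x \<odot> y)"
  by (simp add: ext_finite_def ext_mul_def)

lemma ext_mul_assoc: "(x \<odot> y) \<odot> z = x \<odot> (y \<odot> z)"
proof
  fix U
  show "((x \<odot> y) \<odot> z) U = (x \<odot> (y \<odot> z)) U"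
  proof (cases "finite U")
    case False then show ?thesis by (simp add: ext_mul_def)
  next
    case fU: True
    define F where "F R S = inv_sign S (U - S) * inv_sign R (S - R) * x R * y (S - R) * z (U - S)"
      for R S
    have "((x \<odot> y) \<odot> z) U = (\<Sum>S\<in>Pow U. \<Sum>R\<in>Pow S. F R S)"
      unfolding ext_mul_finite[OF fU] F_def
      by (intro sum.cong refl, subst ext_mul_finite)
        (auto intro: finite_subset[OF _ fU] simp: sum_distrib_left sum_distrib_right algebra_simps)
    also have "\<dots> = (\<Sum>S\<in>Pow U. \<Sum>R\<in>{R\<in>Pow U. R \<subseteq> S}. F R S)"
      by (rule sum.cong[OF refl]) (rule sum.cong, auto)
    also have "\<dots> = (\<Sum>R\<in>Pow U. \<Sum>S\<in>{S\<in>Pow U. R \<subseteq> S}. F R S)"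
      using sum.swap_restrict[of "Pow U" "Pow U" "\<lambda>S R. F R S" "\<lambda>S R. R \<subseteq> S"] fU by simp
    also have "\<dots> = (\<Sum>R\<in>Pow U. \<Sum>S'\<in>Pow (U - R). F R (R \<union> S'))"
    proof (rule sum.cong[OF refl])
      fix R assume "R \<in> Pow U"
      then have "bij_betw (\<lambda>S'. R \<union> S') (Pow (U - R)) {S\<in>Pow U. R \<subseteq> S}"
        by (intro bij_betw_byWitness[where f'="\<lambda>S. S - R"]) auto
      then show "(\<Sum>S\<in>{S\<in>Pow U. R \<subseteq> S}. F R S) = (\<Sum>S'\<in>Pow (U - R). F R (R \<union> S'))"
        by (rule sum.reindex_bij_betw[symmetric])
    qed
    also have "\<dots> = (x \<odot> (y \<odot> z)) U"
      unfolding ext_mul_finite[OF fU]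
    proof (rule sum.cong[OF refl])
      fix R assume R: "R \<in> Pow U"
      have fUR: "finite (U - R)" and fR: "finite R" using R fU finite_subset by auto
      show "(\<Sum>S'\<in>Pow (U - R). F R (R \<union> S')) = inv_sign R (U - R) * x R * (y \<odot> z) (U - R)"
        unfolding ext_mul_finite[OF fUR] sum_distrib_left
      proof (rule sum.cong[OF refl])
        fix S' assume S': "S' \<in> Pow (U - R)"
        define T where "T = U - R - S'"
        have fin: "finite S'" "finite T" using S' fUR finite_subset T_def by auto
        have "R \<union> S' - R = S'" "U - (R \<union> S') = T" "U - R = S' \<union> T" using S' T_def by auto
        moreover have "inv_sign (R \<union> S') T = inv_sign R T * inv_sign S' T"
          by (rule inv_sign_Un_left) (use fR fin S' T_def in auto)
        moreover have "inv_sign R (S' \<union> T) = inv_sign R S' * inv_sign R T"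
          by (rule inv_sign_Un_right) (use fR fin S' T_def in auto)
        ultimately show "F R (R \<union> S') =
            inv_sign R (U - R) * x R * (inv_sign S' (U - R - S') * y S' * z (U - R - S'))"
          unfolding F_def T_def[symmetric] by (simp add: algebra_simps)
      qed
    qed
    finally show ?thesis .
  qed
qed

lemma ext_one_mul: "ext_finite x \<Longrightarrow> ext_one \<odot> x = x"
proof
  fix U assume "ext_finite x"
  then show "(ext_one \<odot> x) U = x U"
  proof (cases "finite U")
    case True
    have "(ext_one \<odot> x) U = (\<Sum>S\<in>Pow U. if S = {} then x U else 0)"
      unfolding ext_mul_finite[OF True] by (rule sum.cong) (auto simp: ext_one_def)
    then show ?thesis using True by (simp add: sum.delta')
  qed (simp add: ext_mul_def ext_finite_def)
qed

lemma ext_mul_one: "ext_finite x \<Longrightarrow> x \<odot> ext_one = x"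
proof
  fix U assume "ext_finite x"
  then show "(x \<odot> ext_one) U = x U"
  proof (cases "finite U")
    case True
    have "(x \<odot> ext_one) U = (\<Sum>S\<in>Pow U. if S = U then x U else 0)"
      unfolding ext_mul_finite[OF True] by (rule sum.cong) (auto simp: ext_one_def)
    then show ?thesis using True by simp
  qed (simp add: ext_mul_def ext_finite_def)
qed

lemma ext_mul_scale_left: "ext_scale c x \<odot> y = ext_scale c (x \<odot> y)"
  by (auto simp: ext_mul_def ext_scale_def sum_distrib_left algebra_simps)

lemma ext_mul_add_left: "(\<lambda>U. x U + y U) \<odot> z = (\<lambda>U. (x \<odot> z) U + (y \<odot> z) U)"
  and ext_mul_add_right: "x \<odot> (\<lambda>U. y U + z U) = (\<lambda>U. (x \<odot> y) U + (x \<odot> z) U)"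
  by (auto simp: ext_mul_def algebra_simps sum.distrib)

typedef exterior = "{x::ext. ext_finite x}" morphisms coeffs Exterior
  by (rule exI[of _ "\<lambda>_. 0"]) (simp add: ext_finite_def)

setup_lifting type_definition_exterior

instantiation exterior :: ring_1
begin
lift_definition zero_exterior :: exterior is ext_zero by (simp add: ext_finite_def ext_zero_def)
lift_definition one_exterior :: exterior is ext_one by (simp add: ext_finite_def ext_one_def)
lift_definition plus_exterior :: "exterior \<Rightarrow> exterior \<Rightarrow> exterior" is "\<lambda>x y U. x U + y U"
  by (simp add: ext_finite_def)
lift_definition uminus_exterior :: "exterior \<Rightarrow> exterior" is "\<lambda>x U. - x U"
  by (simp add: ext_finite_def)
lift_definition minus_exterior :: "exterior \<Rightarrow> exterior \<Rightarrow> exterior" is "\<lambda>x y U. x U - y U"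
  by (simp add: ext_finite_def)
lift_definition times_exterior :: "exterior \<Rightarrow> exterior \<Rightarrow> exterior" is ext_mul
  by (rule ext_finite_ext_mul)
instance
proof
  fix a b c :: exterior
  show "a * b * c = a * (b * c)" by transfer (rule ext_mul_assoc)
  show "1 * a = a" by transfer (rule ext_one_mul)
  show "a * 1 = a" by transfer (rule ext_mul_one)
  show "(a + b) * c = a * c + b * c" by transfer (rule ext_mul_add_left)
  show "a * (b + c) = a * b + a * c" by transfer (rule ext_mul_add_right)
  show "a + b + c = a + (b + c)" by transfer (simp add: algebra_simps)
  show "a + b = b + a" by transfer (simp add: algebra_simps)
  show "0 + a = a" by transfer (simp add: ext_zero_def)
  show "- a + a = 0" by transfer (simp add: ext_zero_def)
  show "a - b = a + - b" by transfer simp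
  show "(0::exterior) \<noteq> 1" by transfer (auto simp: ext_zero_def ext_one_def fun_eq_iff)
qed
end
lemma coeffs_times: "coeffs (x * y) = coeffs x \<odot> coeffs y"
  by transfer simp

lemma coeffs_one: "coeffs 1 = ext_one"
  by transfer simp

lemma coeffs_sum: "finite I \<Longrightarrow> coeffs (sum f I) = ext_sum (\<lambda>i. coeffs (f i)) I"
  by (induction I rule: finite_induct)
    (simp_all add: zero_exterior.rep_eq plus_exterior.rep_eq ext_zero_def ext_sum_def)

lemma coeffs_prod_list: "ext_prod_list (map (\<lambda>k. coeffs (f k)) xs) = coeffs (prod_list (map f xs))"
  by (induction xs) (simp_all add: ext_prod_list_def coeffs_one coeffs_times)

lift_definition scalar :: "complex \<Rightarrow> exterior" is "\<lambda>c. ext_scale c ext_one"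
  by (simp add: ext_finite_def ext_scale_def ext_one_def)

lemma coeffs_scalar_mult: "coeffs (scalar c * x) = ext_scale c (coeffs x)"
  by transfer (simp add: ext_mul_scale_left ext_one_mul)

lemma scalar_mult: "scalar (a * b) = scalar a * scalar b"
  by (rule coeffs_inject[THEN iffD1]) (simp add: coeffs_scalar_mult scalar.rep_eq ext_scale_def mult.assoc)

lemma scalar_add: "scalar (a + b) = scalar a + scalar b"
  and scalar_uminus: "scalar (- a) = - scalar a"
  and scalar_0: "scalar 0 = 0"
  and scalar_1: "scalar 1 = 1"
  by (transfer; auto simp: ext_scale_def ext_zero_def algebra_simps)+

lemma scalar_of_int: "scalar (of_int k) = of_int k"
proof -
  have "scalar (of_nat m) = of_nat m" for m
    by (induction m) (simp_all add: scalar_0 scalar_add scalar_1)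
  then show ?thesis
    by (cases k rule: int_cases2) (simp_all add: scalar_uminus)
qed

lemma eq_neg_self_imp_zero:
  fixes x :: exterior
  assumes "x = - x"
  shows "x = 0"
proof -
  have "x = scalar (1/2 + 1/2) * x" by (simp add: scalar_1)
  also have "\<dots> = scalar (1/2) * (x + x)" by (simp only: scalar_add algebra_simps)
  also have "x + x = 0" using assms by (metis add.right_inverse)
  finally show ?thesis by simp
qed

section \<open>Parity\<close>

definition has_parity :: "bool \<Rightarrow> exterior \<Rightarrow> bool" where
  "has_parity e x \<longleftrightarrow> (\<forall>U. coeffs x U \<noteq> 0 \<longrightarrow> even (card U) = e)"

lemma has_parity_mult:
  assumes x: "has_parity a x" and y: "has_parity b y"
  shows "has_parity (a = b) (x * y)"
  unfolding has_parity_def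
proof (intro allI impI)
  fix U assume U: "coeffs (x * y) U \<noteq> 0"
  then have fU: "finite U" by (auto simp: coeffs_times ext_mul_def split: if_splits)
  from U obtain S where "S \<in> Pow U" "inv_sign S (U - S) * coeffs x S * coeffs y (U - S) \<noteq> 0"
    unfolding coeffs_times ext_mul_finite[OF fU] using sum.not_neutral_contains_not_neutral by blast
  moreover from this have "card U = card S + card (U - S)"
    using fU by (metis PowD card_Diff_subset card_mono finite_subset le_add_diff_inverse)
  ultimately show "even (card U) = (a = b)"
    using x y by (auto simp: has_parity_def)
qed

lemma has_parity_add: "has_parity e x \<Longrightarrow> has_parity e y \<Longrightarrow> has_parity e (x + y)"
  unfolding has_parity_def plus_exterior.rep_eq by (metis add.right_neutral add_0)

lemma has_parity_uminus: "has_parity e x \<Longrightarrow> has_parity e (- x)"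
  by (simp add: has_parity_def uminus_exterior.rep_eq)

lemma has_parity_diff: "has_parity e x \<Longrightarrow> has_parity e y \<Longrightarrow> has_parity e (x - y)"
  unfolding diff_conv_add_uminus by (intro has_parity_add has_parity_uminus)

lemma has_parity_0 [simp]: "has_parity e 0"
  by (simp add: has_parity_def zero_exterior.rep_eq ext_zero_def)

lemma has_parity_sum: "(\<And>i. i \<in> I \<Longrightarrow> has_parity e (f i)) \<Longrightarrow> has_parity e (sum f I)"
  by (induction I rule: infinite_finite_induct) (auto intro: has_parity_add)

lemma has_parity_1 [simp]: "has_parity True 1"
  by (simp add: has_parity_def one_exterior.rep_eq ext_one_def)

lemma has_parity_scalar [simp]: "has_parity True (scalar c)"
  by (simp add: has_parity_def scalar.rep_eq ext_scale_def ext_one_def)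

lemma even_commute:
  assumes "has_parity True x"
  shows "x * y = y * x"
proof (rule coeffs_inject[THEN iffD1], rule ext)
  fix U
  show "coeffs (x * y) U = coeffs (y * x) U"
  proof (cases "finite U")
    case fU: True
    have "inv_sign S (U - S) * coeffs x S = inv_sign (U - S) S * coeffs x S" if "S \<subseteq> U" for S
      using assms inv_sign_swap[of S "U - S"] that finite_subset[OF _ fU]
      by (cases "coeffs x S = 0") (auto simp: has_parity_def)
    then show ?thesis
      unfolding coeffs_times ext_mul_finite[OF fU, of "coeffs x" "coeffs y"]
        ext_mul_finite_compl[OF fU, of "coeffs y" "coeffs x"]
      by (intro sum.cong) (auto simp: mult_ac)
  qed (simp add: coeffs_times ext_mul_def)
qed

lemma odd_anticommute:
  assumes "has_parity False x" "has_parity False y"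
  shows "x * y = - (y * x)"
proof (rule coeffs_inject[THEN iffD1], rule ext)
  fix U
  show "coeffs (x * y) U = coeffs (- (y * x)) U"
  proof (cases "finite U")
    case fU: True
    have "inv_sign S (U - S) * coeffs x S * coeffs y (U - S)
        = - (inv_sign (U - S) S * coeffs y (U - S) * coeffs x S)" if "S \<subseteq> U" for S
      using assms inv_sign_swap[of S "U - S"] that finite_subset[OF _ fU]
      by (cases "coeffs x S = 0 \<or> coeffs y (U - S) = 0") (auto simp: has_parity_def)
    then show ?thesis
      unfolding uminus_exterior.rep_eq coeffs_times ext_mul_finite[OF fU, of "coeffs x" "coeffs y"]
        ext_mul_finite_compl[OF fU, of "coeffs y" "coeffs x"] sum_negf[symmetric]
      by (intro sum.cong) simp_all
  qed (simp add: coeffs_times uminus_exterior.rep_eq ext_mul_def)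
qed

section \<open>The even subalgebra\<close>

typedef even_exterior = "{x. has_parity True x}" morphisms of_even Even
  by (rule exI[of _ 0]) simp

setup_lifting type_definition_even_exterior

instantiation even_exterior :: comm_ring_1
begin
lift_definition zero_even_exterior :: even_exterior is 0 by simp
lift_definition one_even_exterior :: even_exterior is 1 by simp
lift_definition plus_even_exterior :: "even_exterior \<Rightarrow> even_exterior \<Rightarrow> even_exterior" is "(+)"
  by (rule has_parity_add)
lift_definition uminus_even_exterior :: "even_exterior \<Rightarrow> even_exterior" is uminus
  by (rule has_parity_uminus)
lift_definition minus_even_exterior :: "even_exterior \<Rightarrow> even_exterior \<Rightarrow> even_exterior" is "(-)"
  by (rule has_parity_diff)
lift_definition times_even_exterior :: "even_exterior \<Rightarrow> even_exterior \<Rightarrow> even_exterior" is "(*)"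
  using has_parity_mult by fastforce
instance
proof
  fix a b c :: even_exterior
  show "a * b * c = a * (b * c)" by transfer (simp add: mult.assoc)
  show "a * b = b * a" by transfer (simp add: even_commute)
  show "1 * a = a" by transfer simp
  show "(a + b) * c = a * c + b * c" by transfer (simp add: distrib_right)
  show "a + b + c = a + (b + c)" by transfer (simp add: add.assoc)
  show "a + b = b + a" by transfer (simp add: add.commute)
  show "0 + a = a" by transfer simp
  show "- a + a = 0" by transfer simp
  show "a - b = a + - b" by transfer simp
  show "(0::even_exterior) \<noteq> 1" by transfer simp
qed
end

lemma of_even_0: "of_even 0 = 0"
  and of_even_1: "of_even 1 = 1"
  and of_even_add: "of_even (x + y) = of_even x + of_even y"
  and of_even_uminus: "of_even (- x) = - of_even x"
  and of_even_mult: "of_even (x * y) = of_even x * of_even y"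
  by (transfer; simp)+

lemma of_even_sum: "of_even (sum f I) = (\<Sum>i\<in>I. of_even (f i))"
  by (induction I rule: infinite_finite_induct) (simp_all add: of_even_0 of_even_add)

lemma sum_of_even_mult: "(\<Sum>j\<in>J. of_even (X j) * a) = of_even (\<Sum>j\<in>J. X j) * a"
  by (simp add: of_even_sum sum_distrib_right)

lemma of_even_of_int: "of_even (of_int k) = of_int k"
proof -
  have "of_even (of_nat m) = of_nat m" for m
    by (induction m) (simp_all add: of_even_0 of_even_add of_even_1)
  then show ?thesis
    by (cases k rule: int_cases2) (simp_all add: of_even_uminus)
qed

lemma of_even_Even: "has_parity True x \<Longrightarrow> of_even (Even x) = x"
  by (simp add: Even_inverse)

section \<open>Matrices over a semiring\<close>

text \<open>Square matrices are indexed by \<open>{1..n}\<close>; entries outside this range are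
  irrelevant, whence the equivalence \<open>mat_eq_on\<close>.\<close>

type_synonym 'a gmat = "nat \<Rightarrow> nat \<Rightarrow> 'a"

definition gmat_mul :: "nat \<Rightarrow> 'a::semiring_1 gmat \<Rightarrow> 'a gmat \<Rightarrow> 'a gmat" where "gmat_mul n X Y = (\<lambda>i j. \<Sum>k\<in>{1..n}. X i k * Y k j)"

definition gmat_id :: "'a::semiring_1 gmat" where
  "gmat_id = (\<lambda>i j. if i = j then 1 else 0)"

fun gmat_pow :: "nat \<Rightarrow> 'a::semiring_1 gmat \<Rightarrow> nat \<Rightarrow> 'a gmat" where
  "gmat_pow n X 0 = gmat_id"
| "gmat_pow n X (Suc k) = gmat_mul n (gmat_pow n X k) X"

definition mat_eq_on :: "nat \<Rightarrow> 'a gmat \<Rightarrow> 'a gmat \<Rightarrow> bool" where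
  "mat_eq_on n X Y \<longleftrightarrow> (\<forall>i\<in>{1..n}. \<forall>j\<in>{1..n}. X i j = Y i j)"

lemma gmat_mul_assoc: "gmat_mul n (gmat_mul n X Y) Z = gmat_mul n X (gmat_mul n Y Z)"
proof (intro ext)
  fix i j
  have "gmat_mul n (gmat_mul n X Y) Z i j = (\<Sum>k\<in>{1..n}. \<Sum>l\<in>{1..n}. X i l * Y l k * Z k j)"
    unfolding gmat_mul_def by (simp add: sum_distrib_right)
  also have "\<dots> = (\<Sum>l\<in>{1..n}. \<Sum>k\<in>{1..n}. X i l * Y l k * Z k j)"
    by (rule sum.swap)
  also have "\<dots> = gmat_mul n X (gmat_mul n Y Z) i j"
    unfolding gmat_mul_def by (simp add: sum_distrib_left mult.assoc)
  finally show "gmat_mul n (gmat_mul n X Y) Z i j = gmat_mul n X (gmat_mul n Y Z) i j" .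
qed

lemma gmat_mul_cong:
  "(\<And>k. k \<in> {1..n} \<Longrightarrow> X i k = X' i k)
    \<Longrightarrow> (\<And>k. k \<in> {1..n} \<Longrightarrow> Y k j = Y' k j)
    \<Longrightarrow> gmat_mul n X Y i j = gmat_mul n X' Y' i j"
  unfolding gmat_mul_def by (rule sum.cong) auto

lemma mat_eq_on_refl: "mat_eq_on n X X"
  by (simp add: mat_eq_on_def)

lemma mat_eq_on_gmat_mul:
  "mat_eq_on n X X' \<Longrightarrow> mat_eq_on n Y Y' \<Longrightarrow> mat_eq_on n (gmat_mul n X Y) (gmat_mul n X' Y')"
  unfolding mat_eq_on_def by (auto intro!: gmat_mul_cong)

lemma gmat_mul_id_left: "i \<in> {1..n} \<Longrightarrow> gmat_mul n gmat_id X i j = X i j"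
proof -
  have "gmat_mul n gmat_id X i j = (\<Sum>k\<in>{1..n}. if i = k then X k j else 0)"
    unfolding gmat_mul_def gmat_id_def by (rule sum.cong) auto
  then show "i \<in> {1..n} \<Longrightarrow> ?thesis" by simp
qed

lemma gmat_mul_id_right: "j \<in> {1..n} \<Longrightarrow> gmat_mul n X gmat_id i j = X i j"
proof -
  have "gmat_mul n X gmat_id i j = (\<Sum>k\<in>{1..n}. if k = j then X i k else 0)"
    unfolding gmat_mul_def gmat_id_def by (rule sum.cong) auto
  then show "j \<in> {1..n} \<Longrightarrow> ?thesis" by simp
qed

lemma gmat_pow_Suc_left: "mat_eq_on n (gmat_mul n X (gmat_pow n X q)) (gmat_pow n X (Suc q))"
proof (induction q)
  case 0
  then show ?case by (simp add: mat_eq_on_def gmat_mul_id_left gmat_mul_id_right)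
next
  case (Suc q)
  have "mat_eq_on n (gmat_mul n (gmat_mul n X (gmat_pow n X q)) X) (gmat_mul n (gmat_pow n X (Suc q)) X)"
    by (rule mat_eq_on_gmat_mul[OF Suc mat_eq_on_refl])
  then show ?case by (simp add: gmat_mul_assoc)
qed

lemma gmat_pow_add:
  "j \<in> {1..n} \<Longrightarrow> gmat_mul n (gmat_pow n X a) (gmat_pow n X b) i j = gmat_pow n X (a + b) i j"
proof (induction b arbitrary: j)
  case 0
  then show ?case by (simp add: gmat_mul_id_right)
next
  case (Suc b)
  have "gmat_mul n (gmat_pow n X a) (gmat_pow n X (Suc b)) i j
      = gmat_mul n (gmat_mul n (gmat_pow n X a) (gmat_pow n X b)) X i j"
    by (simp add: gmat_mul_assoc)
  also have "\<dots> = gmat_mul n (gmat_pow n X (a + b)) X i j"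
    by (rule gmat_mul_cong) (use Suc in auto)
  finally show ?case by simp
qed

lemma of_even_gmat_mul:
  "of_even (gmat_mul n X Y i j) = gmat_mul n (\<lambda>i j. of_even (X i j)) (\<lambda>i j. of_even (Y i j)) i j"
  by (simp add: gmat_mul_def of_even_sum of_even_mult)

lemma of_even_gmat_pow: "of_even (gmat_pow n X q i j) = gmat_pow n (\<lambda>i j. of_even (X i j)) q i j"
  by (induction q arbitrary: i j) (simp_all add: gmat_id_def of_even_0 of_even_1 of_even_gmat_mul)

lemma has_parity_gmat_mul:
  "(\<And>k. has_parity a (X i k)) \<Longrightarrow> (\<And>k. has_parity b (Y k j))
    \<Longrightarrow> has_parity (a = b) (gmat_mul n X Y i j)"
  unfolding gmat_mul_def by (intro has_parity_sum has_parity_mult)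

lemma has_parity_gmat_pow: "(\<And>i j. has_parity True (X i j)) \<Longrightarrow> has_parity True (gmat_pow n X q i j)"
proof (induction q arbitrary: i j)
  case (Suc q)
  then show ?case using has_parity_gmat_mul[of True _ _ True] by simp
qed (simp add: gmat_id_def)

lemma coeffs_gmat_mul:
  "mat_mul n (\<lambda>i j. coeffs (X i j)) (\<lambda>i j. coeffs (Y i j)) = (\<lambda>i j. coeffs (gmat_mul n X Y i j))"
  by (simp add: mat_mul_def gmat_mul_def coeffs_sum coeffs_times)

lemma coeffs_gmat_pow: "mat_pow n (\<lambda>i j. coeffs (X i j)) k = (\<lambda>i j. coeffs (gmat_pow n X k i j))"
proof (induction k)
  case 0
  then show ?case by (simp add: fun_eq_iff mat_id_def gmat_id_def coeffs_one zero_exterior.rep_eq)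
next
  case (Suc k)
  then show ?case by (simp add: coeffs_gmat_mul)
qed

definition generator :: "gen \<Rightarrow> exterior" where
  "generator g = Exterior (ext_gen g)"

lemma coeffs_generator: "coeffs (generator g) = ext_gen g"
  unfolding generator_def by (rule Exterior_inverse) (auto simp: ext_finite_def ext_gen_def)

lemma odd_generator: "has_parity False (generator g)"
  by (auto simp: has_parity_def coeffs_generator ext_gen_def)

definition matA :: "exterior gmat" where
  "matA i j = (if i < j then generator (True, i, j)
     else if j < i then - generator (True, j, i) else 0)"

definition matB :: "exterior gmat" where
  "matB i j = generator (False, min i j, max i j)"

lemma coeffs_matA: "coeffs (matA i j) = gen_a i j"
  by (auto simp: matA_def gen_a_def coeffs_generator uminus_exterior.rep_eq
      zero_exterior.rep_eq ext_scale_def)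

lemma coeffs_matB: "coeffs (matB i j) = gen_b i j"
  by (simp add: matB_def gen_b_def coeffs_generator)

lemma matA_antisym: "matA j i = - matA i j"
  by (auto simp: matA_def)

lemma matB_sym: "matB j i = matB i j"
  by (simp add: matB_def min.commute max.commute)

lemma odd_matA: "has_parity False (matA i j)"
  by (auto simp: matA_def intro: odd_generator has_parity_uminus)

lemma odd_matB: "has_parity False (matB i j)"
  by (simp add: matB_def odd_generator)

definition matAB :: "nat \<Rightarrow> exterior gmat" where
  "matAB n = gmat_mul n matA matB"

definition matBA :: "nat \<Rightarrow> exterior gmat" where
  "matBA n = gmat_mul n matB matA"

lemma even_matAB: "has_parity True (matAB n i j)"
  and even_matBA: "has_parity True (matBA n i j)"
  using has_parity_gmat_mul[of False _ _ False] odd_matA odd_matB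
  by (simp_all add: matAB_def matBA_def)

lemma even_matAB_pow: "has_parity True (gmat_pow n (matAB n) q i j)"
  and even_matBA_pow: "has_parity True (gmat_pow n (matBA n) q i j)"
  by (simp_all add: has_parity_gmat_pow even_matAB even_matBA)

lemma matAB_transpose: "matAB n k i = matBA n i k"
  unfolding matAB_def matBA_def gmat_mul_def
proof (rule sum.cong[OF refl])
  fix l
  have "matB i l * matA l k = - (matA l k * matB i l)"
    by (rule odd_anticommute) (simp_all add: odd_matA odd_matB)
  then show "matA k l * matB l i = matB i l * matA l k"
    by (simp add: matA_antisym[of l k] matB_sym[of i l])
qed

lemma matAB_pow_transpose:
  "i \<in> {1..n} \<Longrightarrow> j \<in> {1..n} \<Longrightarrow> gmat_pow n (matAB n) q j i = gmat_pow n (matBA n) q i j"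
proof (induction q arbitrary: i j)
  case 0
  then show ?case by (simp add: gmat_id_def)
next
  case (Suc q)
  have "gmat_pow n (matAB n) (Suc q) j i = (\<Sum>k\<in>{1..n}. gmat_pow n (matAB n) q j k * matAB n k i)"
    by (simp add: gmat_mul_def)
  also have "\<dots> = (\<Sum>k\<in>{1..n}. matBA n i k * gmat_pow n (matBA n) q k j)"
  proof (rule sum.cong[OF refl])
    fix k assume k: "k \<in> {1..n}"
    have "gmat_pow n (matAB n) q j k * matAB n k i = gmat_pow n (matBA n) q k j * matBA n i k"
      using Suc.IH[OF k Suc.prems(2)] matAB_transpose[of n k i] by (simp only:)
    also have "\<dots> = matBA n i k * gmat_pow n (matBA n) q k j"
      by (rule even_commute[OF even_matBA_pow])
    finally show "gmat_pow n (matAB n) q j k * matAB n k i = matBA n i k * gmat_pow n (matBA n) q k j" .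
  qed
  also have "\<dots> = gmat_pow n (matBA n) (Suc q) i j"
    using gmat_pow_Suc_left[of n "matBA n" q] Suc.prems by (simp add: gmat_mul_def mat_eq_on_def)
  finally show ?case .
qed

lemma matAB_pow_mul_matA:
  "mat_eq_on n (gmat_mul n (gmat_pow n (matAB n) q) matA) (gmat_mul n matA (gmat_pow n (matBA n) q))"
proof (induction q)
  case 0
  then show ?case by (simp add: mat_eq_on_def gmat_mul_id_left gmat_mul_id_right)
next
  case (Suc q)
  have "gmat_mul n (gmat_pow n (matAB n) (Suc q)) matA
      = gmat_mul n (gmat_mul n (gmat_pow n (matAB n) q) matA) (matBA n)"
    and "gmat_mul n matA (gmat_pow n (matBA n) (Suc q))
      = gmat_mul n (gmat_mul n matA (gmat_pow n (matBA n) q)) (matBA n)"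
    by (simp_all add: matAB_def matBA_def gmat_mul_assoc)
  then show ?case using mat_eq_on_gmat_mul[OF Suc mat_eq_on_refl] by simp
qed

text \<open>Writing \<open>(AB)\<^sup>r\<^sup>+\<^sup>1 = A Y\<close> with \<open>Y = (BA)\<^sup>r B\<close> odd, anticommuting the entries
  turns \<open>tr (A Y)\<close> into \<open>- tr (Y A) = - tr ((BA)\<^sup>r\<^sup>+\<^sup>1)\<close>, which is \<open>- tr ((AB)\<^sup>r\<^sup>+\<^sup>1)\<close>
  by transposition.\<close>
lemma trace_matAB_pow_eq_0: "(\<Sum>j\<in>{1..n}. gmat_pow n (matAB n) (Suc r) j j) = 0"
proof -
  define Y where "Y = gmat_mul n (gmat_pow n (matBA n) r) matB"
  have odd_Y: "has_parity False (Y k j)" for k j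
    unfolding Y_def using has_parity_gmat_mul[of True _ _ False] even_matBA_pow odd_matB by simp
  have "gmat_pow n (matAB n) (Suc r) = gmat_mul n (gmat_mul n (gmat_pow n (matAB n) r) matA) matB"
    by (simp add: matAB_def gmat_mul_assoc)
  then have "mat_eq_on n (gmat_pow n (matAB n) (Suc r)) (gmat_mul n matA Y)"
    using mat_eq_on_gmat_mul[OF matAB_pow_mul_matA mat_eq_on_refl, of n r matB]
    by (simp add: Y_def gmat_mul_assoc)
  then have "(\<Sum>j\<in>{1..n}. gmat_pow n (matAB n) (Suc r) j j)
      = (\<Sum>j\<in>{1..n}. \<Sum>k\<in>{1..n}. matA j k * Y k j)"
    by (auto simp: mat_eq_on_def gmat_mul_def intro!: sum.cong)
  also have "\<dots> = (\<Sum>j\<in>{1..n}. \<Sum>k\<in>{1..n}. - (Y k j * matA j k))"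
    by (intro sum.cong refl odd_anticommute odd_matA odd_Y)
  also have "\<dots> = - (\<Sum>k\<in>{1..n}. gmat_mul n Y matA k k)"
    by (subst sum.swap) (simp add: sum_negf gmat_mul_def)
  also have "\<dots> = - (\<Sum>k\<in>{1..n}. gmat_pow n (matBA n) (Suc r) k k)"
    by (simp add: Y_def gmat_mul_assoc matBA_def)
  also have "\<dots> = - (\<Sum>k\<in>{1..n}. gmat_pow n (matAB n) (Suc r) k k)"
    using matAB_pow_transpose[of _ n _ "Suc r"] by (metis (no_types, lifting) sum.cong)
  finally show ?thesis by (rule eq_neg_self_imp_zero)
qed

definition matA_BA_pow :: "nat \<Rightarrow> nat \<Rightarrow> exterior gmat" where
  "matA_BA_pow n N = gmat_mul n matA (gmat_pow n (matBA n) N)"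

lemma matA_BA_pow_antisym:
  assumes "i \<in> {1..n}" "j \<in> {1..n}"
  shows "matA_BA_pow n N j i = - matA_BA_pow n N i j"
proof -
  have "matA_BA_pow n N j i = gmat_mul n (gmat_pow n (matAB n) N) matA j i"
    using matAB_pow_mul_matA[of n N] assms by (simp add: mat_eq_on_def matA_BA_pow_def)
  also have "\<dots> = (\<Sum>k\<in>{1..n}. - (matA i k * gmat_pow n (matBA n) N k j))"
    unfolding gmat_mul_def
  proof (rule sum.cong[OF refl])
    fix k assume k: "k \<in> {1..n}"
    have "gmat_pow n (matAB n) N j k * matA k i = matA k i * gmat_pow n (matAB n) N j k"
      by (rule even_commute[OF even_matAB_pow])
    then show "gmat_pow n (matAB n) N j k * matA k i = - (matA i k * gmat_pow n (matBA n) N k j)"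
      using matAB_pow_transpose[OF k assms(2)] matA_antisym[of k i] by simp
  qed
  also have "\<dots> = - matA_BA_pow n N i j"
    by (simp add: matA_BA_pow_def gmat_mul_def sum_negf)
  finally show ?thesis .
qed

section \<open>Sums over permutations and index maps\<close>

lemma sign_transpose_comp:
  assumes "finite D" "q permutes D" "a \<noteq> b"
  shows "sign (transpose a b \<circ> q) = - sign q"
proof -
  have "permutation q" using assms permutes_imp_permutation by blast
  then have "sign (transpose a b \<circ> q) = sign (transpose a b) * sign q"
    by (rule sign_compose[OF permutation_swap_id])
  then show ?thesis using sign_swap_id[of a b] assms(3) by simp
qed

lemma alternating_sum_eq_0:
  fixes H :: "(nat \<Rightarrow> nat) \<Rightarrow> (nat \<Rightarrow> nat) \<Rightarrow> exterior"
  assumes fD: "finite D" and big: "n < card D"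
  shows "(\<Sum>\<sigma>\<in>{\<sigma>. \<sigma> permutes D}. \<Sum>i\<in>PiE D (\<lambda>_. {1..n}). of_int (sign \<sigma>) * H i (i \<circ> \<sigma>)) = 0"
proof -
  have "(\<Sum>\<sigma>\<in>{\<sigma>. \<sigma> permutes D}. \<Sum>i\<in>PiE D (\<lambda>_. {1..n}). of_int (sign \<sigma>) * H i (i \<circ> \<sigma>))
     = (\<Sum>i\<in>PiE D (\<lambda>_. {1..n}). \<Sum>\<sigma>\<in>{\<sigma>. \<sigma> permutes D}. of_int (sign \<sigma>) * H i (i \<circ> \<sigma>))"
    by (rule sum.swap)
  also have "\<dots> = 0"
  proof (rule sum.neutral, rule ballI)
    fix i assume i: "i \<in> PiE D (\<lambda>_. {1..n})"
    have "\<not> inj_on i D"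
    proof
      assume inj: "inj_on i D"
      have "i ` D \<subseteq> {1..n}" using i by auto
      then have "card (i ` D) \<le> n" using card_mono[of "{1..n}"] by fastforce
      then show False using card_image[OF inj] big by simp
    qed
    then obtain a b where ab: "a \<in> D" "b \<in> D" "a \<noteq> b" "i a = i b" unfolding inj_on_def by blast
    define \<tau> where "\<tau> = transpose a b"
    have tp: "\<tau> permutes D" unfolding \<tau>_def using ab by (simp add: permutes_swap_id)
    have it: "i \<circ> (\<tau> \<circ> \<sigma>) = i \<circ> \<sigma>" for \<sigma>
    proof
      fix x show "(i \<circ> (\<tau> \<circ> \<sigma>)) x = (i \<circ> \<sigma>) x"
        using ab(4) by (simp add: \<tau>_def transpose_def)
    qed
    define X where "X = (\<Sum>\<sigma>\<in>{\<sigma>. \<sigma> permutes D}. of_int (sign \<sigma>) * H i (i \<circ> \<sigma>))"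
    have "X = (\<Sum>\<sigma>\<in>{\<sigma>. \<sigma> permutes D}. of_int (sign (\<tau> \<circ> \<sigma>)) * H i (i \<circ> (\<tau> \<circ> \<sigma>)))"
      unfolding X_def by (rule setum_permutations_compose_left[OF tp])
    also have "\<dots> = (\<Sum>\<sigma>\<in>{\<sigma>. \<sigma> permutes D}. - (of_int (sign \<sigma>) * H i (i \<circ> \<sigma>)))"
    proof (rule sum.cong[OF refl])
      fix \<sigma> assume "\<sigma> \<in> {\<sigma>. \<sigma> permutes D}"
      then have "sign (\<tau> \<circ> \<sigma>) = - sign \<sigma>" unfolding \<tau>_def
        using sign_transpose_comp[OF fD _ ab(3)] by simp
      then show "of_int (sign (\<tau> \<circ> \<sigma>)) * H i (i \<circ> (\<tau> \<circ> \<sigma>)) = - (of_int (sign \<sigma>) * H i (i \<circ> \<sigma>))"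
        by (simp add: it)
    qed
    also have "\<dots> = - X" unfolding X_def by (simp add: sum_negf)
    finally have "X = - X" .
    then show "(\<Sum>\<sigma>\<in>{\<sigma>. \<sigma> permutes D}. of_int (sign \<sigma>) * H i (i \<circ> \<sigma>)) = 0"
      using eq_neg_self_imp_zero unfolding X_def by blast
  qed
  finally show ?thesis .
qed

lemma sum_PiE_insert:
  assumes "x \<notin> S"
  shows "(\<Sum>i\<in>PiE (insert x S) T. h i) = (\<Sum>j\<in>T x. \<Sum>i\<in>PiE S T. h (i(x := j)))"
proof -
  have "(\<Sum>i\<in>PiE (insert x S) T. h i) = (\<Sum>(j, i)\<in>T x \<times> PiE S T. h (i(x := j)))"
    unfolding PiE_insert_eq using sum.reindex[OF inj_combinator[OF assms], of h]
    by (simp add: case_prod_unfold)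
  also have "\<dots> = (\<Sum>j\<in>T x. \<Sum>i\<in>PiE S T. h (i(x := j)))"
    by (rule sum.cartesian_product[symmetric])
  finally show ?thesis .
qed

definition evAB :: "nat \<Rightarrow> even_exterior gmat" where
  "evAB n i j = Even (matAB n i j)"

abbreviation evAB_pow :: "nat \<Rightarrow> nat \<Rightarrow> even_exterior gmat" where
  "evAB_pow n q \<equiv> gmat_pow n (evAB n) q"

lemma of_even_evAB: "of_even (evAB n i j) = matAB n i j"
  by (simp add: evAB_def of_even_Even even_matAB)
lemma of_even_evAB_pow: "of_even (evAB_pow n q i j) = gmat_pow n (matAB n) q i j"
  unfolding of_even_gmat_pow of_even_evAB by simp

lemma trace_evAB_pow_eq_0: "0 < q \<Longrightarrow> (\<Sum>j\<in>{1..n}. evAB_pow n q j j) = 0"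
proof -
  assume "0 < q"
  then obtain r where q: "q = Suc r" using gr0_conv_Suc by blast
  have "of_even (\<Sum>j\<in>{1..n}. evAB_pow n q j j) = of_even 0"
    unfolding of_even_sum of_even_evAB_pow of_even_0 q by (rule trace_matAB_pow_eq_0)
  then show ?thesis by (rule of_even_inject[THEN iffD1])
qed

definition even_scalar :: "complex \<Rightarrow> even_exterior" where
  "even_scalar c = Even (scalar c)"

lemma of_even_even_scalar: "of_even (even_scalar c) = scalar c"
  by (simp add: even_scalar_def of_even_Even)

lemma evAB_pow_mul:
  "y \<in> {1..n} \<Longrightarrow> (\<Sum>j\<in>{1..n}. evAB_pow n a x j * evAB_pow n b j y) = evAB_pow n (a + b) x y"
  using gmat_pow_add[of y n "evAB n" a b x] by (simp add: gmat_mul_def)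

definition row_AB_pow :: "nat \<Rightarrow> (nat \<Rightarrow> complex) \<Rightarrow> nat \<Rightarrow> nat \<Rightarrow> even_exterior" where
  "row_AB_pow n u \<alpha> j = (\<Sum>k\<in>{1..n}. even_scalar (u k) * evAB_pow n \<alpha> k j)"

lemma row_AB_pow_mul:
  assumes "y \<in> {1..n}"
  shows "(\<Sum>j\<in>{1..n}. row_AB_pow n u \<alpha> j * evAB_pow n b j y) = row_AB_pow n u (\<alpha> + b) y"
proof -
  have "(\<Sum>j\<in>{1..n}. row_AB_pow n u \<alpha> j * evAB_pow n b j y)
      = (\<Sum>k\<in>{1..n}. even_scalar (u k) * (\<Sum>j\<in>{1..n}. evAB_pow n \<alpha> k j * evAB_pow n b j y))"
    unfolding row_AB_pow_def sum_distrib_right sum_distrib_left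
    by (subst sum.swap) (simp add: mult.assoc)
  also have "\<dots> = row_AB_pow n u (\<alpha> + b) y"
    unfolding evAB_pow_mul[OF assms] row_AB_pow_def ..
  finally show ?thesis .
qed

lemma of_even_row_AB_pow:
  "of_even (row_AB_pow n u a x) = (\<Sum>k\<in>{1..n}. scalar (u k) * gmat_pow n (matAB n) a k x)"
  unfolding row_AB_pow_def of_even_sum of_even_mult of_even_even_scalar of_even_evAB_pow ..

definition bilin_A_BA_pow :: "nat \<Rightarrow> (nat \<Rightarrow> complex) \<Rightarrow> (nat \<Rightarrow> complex) \<Rightarrow> nat \<Rightarrow> exterior" where
  "bilin_A_BA_pow n w v N = (\<Sum>k\<in>{1..n}. \<Sum>l\<in>{1..n}. scalar (w k * v l) * matA_BA_pow n N k l)"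

lemma sum_AB_pow_A_AB_pow:
  assumes k: "k \<in> {1..n}" and l: "l \<in> {1..n}"
  shows "(\<Sum>x\<in>{1..n}. \<Sum>y\<in>{1..n}. gmat_pow n (matAB n) a k x * matA x y * gmat_pow n (matAB n) b l y)
    = matA_BA_pow n (a + b) k l"
proof -
  have "(\<Sum>x\<in>{1..n}. \<Sum>y\<in>{1..n}. gmat_pow n (matAB n) a k x * matA x y * gmat_pow n (matAB n) b l y)
      = gmat_mul n (gmat_mul n (gmat_pow n (matAB n) a) matA) (gmat_pow n (matBA n) b) k l"
    unfolding gmat_mul_def sum_distrib_right
    by (subst sum.swap) (intro sum.cong refl, simp add: matAB_pow_transpose[OF _ l])
  also have "\<dots> = gmat_mul n (gmat_mul n matA (gmat_pow n (matBA n) a)) (gmat_pow n (matBA n) b) k l"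
    by (rule gmat_mul_cong) (use matAB_pow_mul_matA[of n a] k in \<open>auto simp: mat_eq_on_def\<close>)
  also have "\<dots> = matA_BA_pow n (a + b) k l"
    unfolding matA_BA_pow_def gmat_mul_assoc by (rule gmat_mul_cong) (use gmat_pow_add[OF l] in auto)
  finally show ?thesis .
qed

lemma sum4_swap:
  "(\<Sum>x\<in>A. \<Sum>y\<in>B. \<Sum>k\<in>C. \<Sum>l\<in>D. F x y k l) = (\<Sum>k\<in>C. \<Sum>l\<in>D. \<Sum>x\<in>A. \<Sum>y\<in>B. F x y k l)"
proof -
  have "(\<Sum>x\<in>A. \<Sum>y\<in>B. \<Sum>k\<in>C. \<Sum>l\<in>D. F x y k l) = (\<Sum>x\<in>A. \<Sum>k\<in>C. \<Sum>l\<in>D. \<Sum>y\<in>B. F x y k l)"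
    by (intro sum.cong refl) (subst sum.swap, intro sum.cong refl sum.swap)
  also have "\<dots> = (\<Sum>k\<in>C. \<Sum>l\<in>D. \<Sum>x\<in>A. \<Sum>y\<in>B. F x y k l)"
    by (subst sum.swap, intro sum.cong refl sum.swap)
  finally show ?thesis .
qed

lemma sum_row_A_row:
  "(\<Sum>x\<in>{1..n}. \<Sum>y\<in>{1..n}. of_even (row_AB_pow n u a x * row_AB_pow n u' b y) * matA x y)
    = (\<Sum>k\<in>{1..n}. \<Sum>l\<in>{1..n}. scalar (u k * u' l) * matA_BA_pow n (a + b) k l)"
proof -
  let ?X = "\<lambda>k x. gmat_pow n (matAB n) a k x" and ?Y = "\<lambda>l y. gmat_pow n (matAB n) b l y"
  have "scalar (u k) * ?X k x * (scalar (u' l) * ?Y l y) * matA x y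
      = scalar (u k * u' l) * (?X k x * matA x y * ?Y l y)" for k l x y
  proof -
    have "scalar (u k) * ?X k x * (scalar (u' l) * ?Y l y) * matA x y
        = scalar (u k) * (?X k x * scalar (u' l)) * (?Y l y * matA x y)"
      by (simp only: mult.assoc)
    also have "\<dots> = scalar (u k) * (scalar (u' l) * ?X k x) * (matA x y * ?Y l y)"
      by (simp only: even_commute[OF even_matAB_pow] even_commute[OF has_parity_scalar, symmetric])
    finally show ?thesis
      by (simp only: scalar_mult mult.assoc)
  qed
  then have "(\<Sum>x\<in>{1..n}. \<Sum>y\<in>{1..n}. of_even (row_AB_pow n u a x * row_AB_pow n u' b y) * matA x y)
      = (\<Sum>x\<in>{1..n}. \<Sum>y\<in>{1..n}. \<Sum>k\<in>{1..n}. \<Sum>l\<in>{1..n}.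
          scalar (u k * u' l) * (?X k x * matA x y * ?Y l y))"
    unfolding of_even_mult of_even_row_AB_pow sum_distrib_left sum_distrib_right
    by (simp add: sum.swap[of _ "{1..n}" "{1..n}"]) (rule sum.cong[OF refl], rule sum.cong[OF refl], rule sum.swap)
  also have "\<dots> = (\<Sum>k\<in>{1..n}. \<Sum>l\<in>{1..n}. scalar (u k * u' l) *
      (\<Sum>x\<in>{1..n}. \<Sum>y\<in>{1..n}. ?X k x * matA x y * ?Y l y))"
    unfolding sum_distrib_left by (rule sum4_swap)
  also have "\<dots> = (\<Sum>k\<in>{1..n}. \<Sum>l\<in>{1..n}. scalar (u k * u' l) * matA_BA_pow n (a + b) k l)"
    by (intro sum.cong refl) (simp only: sum_AB_pow_A_AB_pow)
  finally show ?thesis .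
qed

section \<open>Weighted sums\<close>

text \<open>\<open>Q_weighted\<close> generalises \<open>Q\<close>: the positions \<open>k \<in> P\<close> carry the factor
  \<open>(AB)\<^sup>p\<^sup>k\<close> instead of \<open>AB\<close>, and the vectors \<open>w, v\<close> at the positions \<open>s, t\<close> are replaced
  by \<open>\<^sup>tw (AB)\<^sup>\<alpha>, \<^sup>tv (AB)\<^sup>\<beta>\<close>. Induction on \<open>P\<close> contracts one position at a time.\<close>

definition Q_term :: "nat \<Rightarrow> (nat \<Rightarrow> complex) \<Rightarrow> (nat \<Rightarrow> complex) \<Rightarrow> nat \<Rightarrow> nat \<Rightarrow> nat set
    \<Rightarrow> (nat \<Rightarrow> nat) \<Rightarrow> nat \<Rightarrow> nat \<Rightarrow> (nat \<Rightarrow> nat) \<Rightarrow> (nat \<Rightarrow> nat) \<Rightarrow> exterior" where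
  "Q_term n w v s t P p \<alpha> \<beta> \<sigma> i =
    of_even (of_int (sign \<sigma>) * (\<Prod>k\<in>P. evAB_pow n (p k) (i k) (i (\<sigma> k)))
      * row_AB_pow n w \<alpha> (i (\<sigma> s)) * row_AB_pow n v \<beta> (i (\<sigma> t))) * matA (i s) (i t)"

definition Q_weighted :: "nat \<Rightarrow> (nat \<Rightarrow> complex) \<Rightarrow> (nat \<Rightarrow> complex) \<Rightarrow> nat \<Rightarrow> nat \<Rightarrow> nat set
    \<Rightarrow> (nat \<Rightarrow> nat) \<Rightarrow> nat \<Rightarrow> nat \<Rightarrow> exterior" where
  "Q_weighted n w v s t P p \<alpha> \<beta> = (\<Sum>\<sigma>\<in>{\<sigma>. \<sigma> permutes insert s (insert t P)}.
      \<Sum>i\<in>PiE (insert s (insert t P)) (\<lambda>_. {1..n}). Q_term n w v s t P p \<alpha> \<beta> \<sigma> i)"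

lemma Q_weighted_eq_0_if_large:
  assumes "finite P" "n < card (insert s (insert t P))"
  shows "Q_weighted n w v s t P p \<alpha> \<beta> = 0"
proof -
  define H where "H i j = of_even ((\<Prod>k\<in>P. evAB_pow n (p k) (i k) (j k))
      * row_AB_pow n w \<alpha> (j s) * row_AB_pow n v \<beta> (j t)) * matA (i s) (i t)"
    for i j :: "nat \<Rightarrow> nat"
  have "Q_weighted n w v s t P p \<alpha> \<beta> = (\<Sum>\<sigma>\<in>{\<sigma>. \<sigma> permutes insert s (insert t P)}.
      \<Sum>i\<in>PiE (insert s (insert t P)) (\<lambda>_. {1..n}). of_int (sign \<sigma>) * H i (i \<circ> \<sigma>))"
    unfolding Q_weighted_def Q_term_def H_def by (simp add: of_even_mult of_even_of_int mult.assoc)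
  also have "\<dots> = 0"
    by (rule alternating_sum_eq_0) (use assms in auto)
  finally show ?thesis .
qed

lemma Q_term_transpose:
  assumes fD: "finite D" and q: "q permutes D" and c: "c \<in> D" and mD: "m \<notin> D"
    and PD: "P \<subseteq> D" and sD: "s \<in> D" and tD: "t \<in> D" and mP: "m \<notin> P"
  shows "Q_term n w v s t (insert m P) p \<alpha> \<beta> (transpose m (q c) \<circ> q) (i(m := j)) =
    of_even (- of_int (sign q) * evAB_pow n (p m) j (i (q c))
      * (\<Prod>k\<in>P. evAB_pow n (p k) (i k) (if k = c then j else i (q k)))
      * row_AB_pow n w \<alpha> (if s = c then j else i (q s))
      * row_AB_pow n v \<beta> (if t = c then j else i (q t))) * matA (i s) (i t)"
proof -
  define \<sigma> where "\<sigma> = transpose m (q c) \<circ> q"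
  have qD: "q k \<in> D" if "k \<in> D" for k
    using permutes_in_image[OF q] that by simp
  have \<sigma>k: "(i(m := j)) (\<sigma> k) = (if k = c then j else i (q k))" if "k \<in> D" for k
    using that c qD mD permutes_inj[OF q] by (auto simp: \<sigma>_def transpose_def inj_eq)
  have \<sigma>m: "(i(m := j)) (\<sigma> m) = i (q c)"
    using c qD mD permutes_not_in[OF q mD] by (auto simp: \<sigma>_def transpose_def)
  have sign: "sign \<sigma> = - sign q"
    using c qD mD unfolding \<sigma>_def by (metis sign_transpose_comp[OF fD q])
  have im: "(i(m := j)) k = i k" if "k \<in> D" for k
    using that mD by auto
  have "(\<Prod>k\<in>P. evAB_pow n (p k) ((i(m := j)) k) ((i(m := j)) (\<sigma> k))) =
      (\<Prod>k\<in>P. evAB_pow n (p k) (i k) (if k = c then j else i (q k)))"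
    using PD by (intro prod.cong refl) (simp only: im \<sigma>k subsetD)
  moreover have "finite P" using PD fD finite_subset by blast
  ultimately show ?thesis
    unfolding Q_term_def \<sigma>_def[symmetric] using mP \<sigma>k[OF sD] \<sigma>k[OF tD] \<sigma>m im[OF sD] im[OF tD]
    by (simp add: sign mult.assoc)
qed

context
  fixes n :: nat and w v :: "nat \<Rightarrow> complex" and s t m :: nat and P :: "nat set"
    and q i :: "nat \<Rightarrow> nat"
  assumes fP: "finite P" and st: "s \<noteq> t" and sP: "s \<notin> P" and tP: "t \<notin> P" and mP: "m \<notin> P"
    and ms: "m \<noteq> s" and mt: "m \<noteq> t"
    and q: "q permutes insert s (insert t P)" and i: "i \<in> PiE (insert s (insert t P)) (\<lambda>_. {1..n})"
begin

private lemma m_notin_positions: "m \<notin> insert s (insert t P)"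
  using mP ms mt by simp

private lemma index_perm_in_range: "k \<in> insert s (insert t P) \<Longrightarrow> i (q k) \<in> {1..n}"
  using PiE_mem[OF i] permutes_in_image[OF q] by blast

private lemma Q_term_transpose_m: "c \<in> insert s (insert t P) \<Longrightarrow>
  Q_term n w v s t (insert m P) p \<alpha> \<beta> (transpose m (q c) \<circ> q) (i(m := j)) =
    of_even (- of_int (sign q) * evAB_pow n (p m) j (i (q c))
      * (\<Prod>k\<in>P. evAB_pow n (p k) (i k) (if k = c then j else i (q k)))
      * row_AB_pow n w \<alpha> (if s = c then j else i (q s))
      * row_AB_pow n v \<beta> (if t = c then j else i (q t))) * matA (i s) (i t)"
  by (rule Q_term_transpose[OF _ q _ m_notin_positions _ _ _ mP]) (use fP in auto)

private lemma sum_Q_term_transpose_P: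
  assumes c: "c \<in> P"
  shows "(\<Sum>j\<in>{1..n}. Q_term n w v s t (insert m P) p \<alpha> \<beta> (transpose m (q c) \<circ> q) (i(m := j)))
    = - Q_term n w v s t P (p(c := p c + p m)) \<alpha> \<beta> q i"
proof -
  have cD: "c \<in> insert s (insert t P)" using c by simp
  have sc: "s \<noteq> c" "t \<noteq> c" using c sP tP by auto
  define R where "R = (\<Prod>k\<in>P - {c}. evAB_pow n (p k) (i k) (i (q k)))"
  define K where "K = - of_int (sign q) * R * row_AB_pow n w \<alpha> (i (q s)) * row_AB_pow n v \<beta> (i (q t))"
  have prodj: "(\<Prod>k\<in>P. evAB_pow n (p k) (i k) (if k = c then j else i (q k)))
      = evAB_pow n (p c) (i c) j * R" for j
    unfolding R_def by (simp add: prod.remove[OF fP c])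
  have prodT: "(\<Prod>k\<in>P. evAB_pow n ((p(c := p c + p m)) k) (i k) (i (q k)))
      = evAB_pow n (p c + p m) (i c) (i (q c)) * R"
    unfolding R_def by (simp add: prod.remove[OF fP c])
  have "(\<Sum>j\<in>{1..n}. Q_term n w v s t (insert m P) p \<alpha> \<beta> (transpose m (q c) \<circ> q) (i(m := j)))
     = (\<Sum>j\<in>{1..n}. of_even (K * (evAB_pow n (p c) (i c) j * evAB_pow n (p m) j (i (q c)))) * matA (i s) (i t))"
  proof (rule sum.cong[OF refl])
    fix j
    show "Q_term n w v s t (insert m P) p \<alpha> \<beta> (transpose m (q c) \<circ> q) (i(m := j)) =
      of_even (K * (evAB_pow n (p c) (i c) j * evAB_pow n (p m) j (i (q c)))) * matA (i s) (i t)"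
      unfolding Q_term_transpose_m[OF cD] prodj K_def using sc by (simp add: mult_ac)
  qed
  also have "\<dots> = of_even (K * evAB_pow n (p c + p m) (i c) (i (q c))) * matA (i s) (i t)"
    unfolding sum_of_even_mult sum_distrib_left[symmetric] evAB_pow_mul[OF index_perm_in_range[OF cD]] ..
  also have "\<dots> = - Q_term n w v s t P (p(c := p c + p m)) \<alpha> \<beta> q i"
    unfolding Q_term_def prodT K_def by (simp add: mult_ac of_even_uminus)
  finally show ?thesis .
qed

private lemma sum_Q_term_transpose_s:
  shows "(\<Sum>j\<in>{1..n}. Q_term n w v s t (insert m P) p \<alpha> \<beta> (transpose m (q s) \<circ> q) (i(m := j)))
    = - Q_term n w v s t P p (\<alpha> + p m) \<beta> q i"
proof -
  have cD: "s \<in> insert s (insert t P)" by simp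
  define R where "R = (\<Prod>k\<in>P. evAB_pow n (p k) (i k) (i (q k)))"
  define K where "K = - of_int (sign q) * R * row_AB_pow n v \<beta> (i (q t))"
  have prodj: "(\<Prod>k\<in>P. evAB_pow n (p k) (i k) (if k = s then j else i (q k))) = R" for j
    unfolding R_def by (rule prod.cong) (use sP in auto)
  have "(\<Sum>j\<in>{1..n}. Q_term n w v s t (insert m P) p \<alpha> \<beta> (transpose m (q s) \<circ> q) (i(m := j)))
     = (\<Sum>j\<in>{1..n}. of_even (K * (row_AB_pow n w \<alpha> j * evAB_pow n (p m) j (i (q s)))) * matA (i s) (i t))"
  proof (rule sum.cong[OF refl])
    fix j
    show "Q_term n w v s t (insert m P) p \<alpha> \<beta> (transpose m (q s) \<circ> q) (i(m := j)) =
      of_even (K * (row_AB_pow n w \<alpha> j * evAB_pow n (p m) j (i (q s)))) * matA (i s) (i t)"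
      unfolding Q_term_transpose_m[OF cD] prodj K_def using st by (simp add: mult_ac)
  qed
  also have "\<dots> = of_even (K * row_AB_pow n w (\<alpha> + p m) (i (q s))) * matA (i s) (i t)"
    unfolding sum_of_even_mult sum_distrib_left[symmetric] row_AB_pow_mul[OF index_perm_in_range[OF cD]] ..
  also have "\<dots> = - Q_term n w v s t P p (\<alpha> + p m) \<beta> q i"
    unfolding Q_term_def R_def K_def by (simp add: mult_ac of_even_uminus)
  finally show ?thesis .
qed

private lemma sum_Q_term_transpose_t:
  shows "(\<Sum>j\<in>{1..n}. Q_term n w v s t (insert m P) p \<alpha> \<beta> (transpose m (q t) \<circ> q) (i(m := j)))
    = - Q_term n w v s t P p \<alpha> (\<beta> + p m) q i"
proof -
  have cD: "t \<in> insert s (insert t P)" by simp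
  define R where "R = (\<Prod>k\<in>P. evAB_pow n (p k) (i k) (i (q k)))"
  define K where "K = - of_int (sign q) * R * row_AB_pow n w \<alpha> (i (q s))"
  have prodj: "(\<Prod>k\<in>P. evAB_pow n (p k) (i k) (if k = t then j else i (q k))) = R" for j
    unfolding R_def by (rule prod.cong) (use tP in auto)
  have "(\<Sum>j\<in>{1..n}. Q_term n w v s t (insert m P) p \<alpha> \<beta> (transpose m (q t) \<circ> q) (i(m := j)))
     = (\<Sum>j\<in>{1..n}. of_even (K * (row_AB_pow n v \<beta> j * evAB_pow n (p m) j (i (q t)))) * matA (i s) (i t))"
  proof (rule sum.cong[OF refl])
    fix j
    show "Q_term n w v s t (insert m P) p \<alpha> \<beta> (transpose m (q t) \<circ> q) (i(m := j)) =
      of_even (K * (row_AB_pow n v \<beta> j * evAB_pow n (p m) j (i (q t)))) * matA (i s) (i t)"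
      unfolding Q_term_transpose_m[OF cD] prodj K_def using st by (simp add: mult_ac)
  qed
  also have "\<dots> = of_even (K * row_AB_pow n v (\<beta> + p m) (i (q t))) * matA (i s) (i t)"
    unfolding sum_of_even_mult sum_distrib_left[symmetric] row_AB_pow_mul[OF index_perm_in_range[OF cD]] ..
  also have "\<dots> = - Q_term n w v s t P p \<alpha> (\<beta> + p m) q i"
    unfolding Q_term_def R_def K_def by (simp add: mult_ac of_even_uminus)
  finally show ?thesis .
qed

private lemma sum_Q_term_fixed:
  assumes pm: "0 < p m"
  shows "(\<Sum>j\<in>{1..n}. Q_term n w v s t (insert m P) p \<alpha> \<beta> q (i(m := j))) = 0"
proof -
  have qm: "q m = m" by (rule permutes_not_in[OF q m_notin_positions])
  have qnm: "q k \<noteq> m" if "k \<in> insert s (insert t P)" for k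
    using permutes_in_image[OF q] that m_notin_positions by auto
  define K where "K = of_int (sign q) * (\<Prod>k\<in>P. evAB_pow n (p k) (i k) (i (q k)))
     * row_AB_pow n w \<alpha> (i (q s)) * row_AB_pow n v \<beta> (i (q t))"
  have "(\<Prod>k\<in>P. evAB_pow n (p k) ((i(m := j)) k) ((i(m := j)) (q k)))
      = (\<Prod>k\<in>P. evAB_pow n (p k) (i k) (i (q k)))" for j
    using mP qnm by (intro prod.cong) auto
  then have "(\<Sum>j\<in>{1..n}. Q_term n w v s t (insert m P) p \<alpha> \<beta> q (i(m := j)))
     = (\<Sum>j\<in>{1..n}. of_even (K * evAB_pow n (p m) j j) * matA (i s) (i t))"
    unfolding Q_term_def prod.insert[OF fP mP] K_def using qm qnm ms mt by (simp add: mult_ac)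
  also have "\<dots> = of_even (K * (\<Sum>j\<in>{1..n}. evAB_pow n (p m) j j)) * matA (i s) (i t)"
    unfolding sum_of_even_mult sum_distrib_left ..
  also have "\<dots> = 0" using trace_evAB_pow_eq_0[OF pm] by (simp add: of_even_0)
  finally show ?thesis .
qed

lemma sum_Q_term_insert:
  assumes "0 < p m"
  shows "(\<Sum>j\<in>{1..n}. Q_term n w v s t (insert m P) p \<alpha> \<beta> q (i(m := j)))
    + (\<Sum>c\<in>insert s (insert t P). \<Sum>j\<in>{1..n}.
        Q_term n w v s t (insert m P) p \<alpha> \<beta> (transpose m (q c) \<circ> q) (i(m := j)))
    = - Q_term n w v s t P p (\<alpha> + p m) \<beta> q i - Q_term n w v s t P p \<alpha> (\<beta> + p m) q i
      - (\<Sum>c\<in>P. Q_term n w v s t P (p(c := p c + p m)) \<alpha> \<beta> q i)"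
proof -
  have s: "s \<notin> insert t P" and fin: "finite (insert t P)" using st sP fP by simp_all
  have "(\<Sum>c\<in>P. \<Sum>j\<in>{1..n}.
        Q_term n w v s t (insert m P) p \<alpha> \<beta> (transpose m (q c) \<circ> q) (i(m := j)))
      = - (\<Sum>c\<in>P. Q_term n w v s t P (p(c := p c + p m)) \<alpha> \<beta> q i)"
    unfolding sum_negf[symmetric] by (rule sum.cong[OF refl], rule sum_Q_term_transpose_P)
  then show ?thesis
    unfolding sum.insert[OF fin s] sum.insert[OF fP tP] sum_Q_term_fixed[of p, OF assms]
      sum_Q_term_transpose_s sum_Q_term_transpose_t
    by (simp add: algebra_simps)
qed

end

lemma Q_weighted_insert:
  assumes fP: "finite P" and st: "s \<noteq> t" and sP: "s \<notin> P" and tP: "t \<notin> P" and mP: "m \<notin> P"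
    and ms: "m \<noteq> s" and mt: "m \<noteq> t" and pm: "0 < p m"
  shows "Q_weighted n w v s t (insert m P) p \<alpha> \<beta> =
    - Q_weighted n w v s t P p (\<alpha> + p m) \<beta> - Q_weighted n w v s t P p \<alpha> (\<beta> + p m)
    - (\<Sum>c\<in>P. Q_weighted n w v s t P (p(c := p c + p m)) \<alpha> \<beta>)"
proof -
  define D where "D = insert s (insert t P)"
  have fD: "finite D" and mD: "m \<notin> D" using fP mP ms mt by (simp_all add: D_def)
  define T where "T = Q_term n w v s t (insert m P) p \<alpha> \<beta>"
  define G where "G \<sigma> = (\<Sum>i\<in>PiE D (\<lambda>_. {1..n}). \<Sum>j\<in>{1..n}. T \<sigma> (i(m := j)))" for \<sigma>
  have D_insert: "insert s (insert t (insert m P)) = insert m D" by (auto simp: D_def)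
  have "Q_weighted n w v s t (insert m P) p \<alpha> \<beta> = (\<Sum>\<sigma>\<in>{\<sigma>. \<sigma> permutes insert m D}. G \<sigma>)"
    unfolding Q_weighted_def G_def T_def D_insert sum_PiE_insert[OF mD] by (subst sum.swap) (rule refl)
  also have "\<dots> = (\<Sum>b\<in>insert m D. \<Sum>q\<in>{q. q permutes D}. G (transpose m b \<circ> q))"
    by (rule sum_over_permutations_insert[OF fD mD])
  also have "\<dots> = (\<Sum>q\<in>{q. q permutes D}. G q + (\<Sum>c\<in>D. G (transpose m (q c) \<circ> q)))"
  proof -
    have "(\<Sum>b\<in>D. G (transpose m b \<circ> q)) = (\<Sum>c\<in>D. G (transpose m (q c) \<circ> q))"
      if "q permutes D" for q
      using sum.reindex_bij_betw[OF permutes_imp_bij[OF that], of "\<lambda>b. G (transpose m b \<circ> q)"]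
      by simp
    moreover have "(\<Sum>b\<in>insert m D. \<Sum>q\<in>{q. q permutes D}. G (transpose m b \<circ> q))
        = (\<Sum>q\<in>{q. q permutes D}. G q) + (\<Sum>q\<in>{q. q permutes D}. \<Sum>b\<in>D. G (transpose m b \<circ> q))"
      by (simp add: sum.insert[OF fD mD]) (rule sum.swap)
    ultimately show ?thesis
      by (simp add: sum.distrib)
  qed
  also have "\<dots> = (\<Sum>q\<in>{q. q permutes D}. \<Sum>i\<in>PiE D (\<lambda>_. {1..n}).
      - Q_term n w v s t P p (\<alpha> + p m) \<beta> q i - Q_term n w v s t P p \<alpha> (\<beta> + p m) q i
      - (\<Sum>c\<in>P. Q_term n w v s t P (p(c := p c + p m)) \<alpha> \<beta> q i))"
  proof (rule sum.cong[OF refl])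
    fix q assume "q \<in> {q. q permutes D}"
    then have q: "q permutes insert s (insert t P)" by (simp add: D_def)
    have "G q + (\<Sum>c\<in>D. G (transpose m (q c) \<circ> q))
        = (\<Sum>i\<in>PiE D (\<lambda>_. {1..n}). (\<Sum>j\<in>{1..n}. T q (i(m := j)))
            + (\<Sum>c\<in>D. \<Sum>j\<in>{1..n}. T (transpose m (q c) \<circ> q) (i(m := j))))"
      unfolding G_def by (subst sum.swap[where A=D]) (simp only: sum.distrib)
    also have "\<dots> = (\<Sum>i\<in>PiE D (\<lambda>_. {1..n}).
        - Q_term n w v s t P p (\<alpha> + p m) \<beta> q i - Q_term n w v s t P p \<alpha> (\<beta> + p m) q i
        - (\<Sum>c\<in>P. Q_term n w v s t P (p(c := p c + p m)) \<alpha> \<beta> q i))"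
      unfolding T_def D_def
      by (rule sum.cong[OF refl], rule sum_Q_term_insert[where p=p, OF fP st sP tP mP ms mt q _ pm])
    finally show "G q + (\<Sum>c\<in>D. G (transpose m (q c) \<circ> q)) = \<dots>" .
  qed
  also have "\<dots> = - Q_weighted n w v s t P p (\<alpha> + p m) \<beta> - Q_weighted n w v s t P p \<alpha> (\<beta> + p m)
      - (\<Sum>c\<in>P. Q_weighted n w v s t P (p(c := p c + p m)) \<alpha> \<beta>)"
    unfolding Q_weighted_def D_def[symmetric] sum_subtractf sum_negf
    by (simp add: sum.swap[of _ P])
  finally show ?thesis .
qed

lemma bilin_A_BA_pow_swap: "bilin_A_BA_pow n v w N = - bilin_A_BA_pow n w v N"
proof -
  have "bilin_A_BA_pow n v w N = (\<Sum>l\<in>{1..n}. \<Sum>k\<in>{1..n}. scalar (v k * w l) * matA_BA_pow n N k l)"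
    unfolding bilin_A_BA_pow_def by (rule sum.swap)
  also have "\<dots> = (\<Sum>l\<in>{1..n}. \<Sum>k\<in>{1..n}. - (scalar (w l * v k) * matA_BA_pow n N l k))"
  proof (intro sum.cong refl)
    fix l k assume "l \<in> {1..n}" "k \<in> {1..n}"
    then show "scalar (v k * w l) * matA_BA_pow n N k l = - (scalar (w l * v k) * matA_BA_pow n N l k)"
      using matA_BA_pow_antisym[of l n k N] by (simp add: mult.commute)
  qed
  finally show ?thesis
    by (simp add: bilin_A_BA_pow_def sum_negf)
qed

lemma Q_weighted_empty:
  assumes st: "s \<noteq> t"
  shows "Q_weighted n w v s t {} p \<alpha> \<beta> = bilin_A_BA_pow n w v (\<alpha> + \<beta>) + bilin_A_BA_pow n w v (\<alpha> + \<beta>)"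
proof -
  define h where "h \<sigma> = (\<Sum>i\<in>PiE {s, t} (\<lambda>_. {1..n}). Q_term n w v s t {} p \<alpha> \<beta> \<sigma> i)" for \<sigma>
  have "Q_weighted n w v s t {} p \<alpha> \<beta> = (\<Sum>\<sigma>\<in>{\<sigma>. \<sigma> permutes insert s {t}}. h \<sigma>)"
    unfolding Q_weighted_def h_def by simp
  also have "\<dots> = (\<Sum>b\<in>insert s {t}. \<Sum>q\<in>{q. q permutes {t}}. h (transpose s b \<circ> q))"
    by (rule sum_over_permutations_insert) (use st in auto)
  also have "\<dots> = h id + h (transpose s t)"
    using st by simp
  finally have Q_eq: "Q_weighted n w v s t {} p \<alpha> \<beta> = h id + h (transpose s t)" .
  define I where "I x y = ((\<lambda>_. undefined)(t := y))(s := x)" for x y :: nat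
  have I: "I x y s = x" "I x y t = y" for x y
    using st by (auto simp: I_def)
  have h_eq: "h \<sigma> = (\<Sum>x\<in>{1..n}. \<Sum>y\<in>{1..n}. Q_term n w v s t {} p \<alpha> \<beta> \<sigma> (I x y))" for \<sigma>
  proof -
    have "h \<sigma> = (\<Sum>x\<in>{1..n}. \<Sum>i\<in>PiE {t} (\<lambda>_. {1..n}). Q_term n w v s t {} p \<alpha> \<beta> \<sigma> (i(s := x)))"
      unfolding h_def using sum_PiE_insert[of s "{t}"] st by simp
    also have "\<dots> = (\<Sum>x\<in>{1..n}. \<Sum>y\<in>{1..n}. \<Sum>i\<in>PiE {} (\<lambda>_. {1..n}).
        Q_term n w v s t {} p \<alpha> \<beta> \<sigma> ((i(t := y))(s := x)))"
      by (intro sum.cong refl sum_PiE_insert) simp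
    finally show ?thesis
      by (simp add: I_def fun_upd_def)
  qed
  have "h id = bilin_A_BA_pow n w v (\<alpha> + \<beta>)"
    unfolding h_eq Q_term_def bilin_A_BA_pow_def sum_row_A_row[symmetric]
    by (simp add: I of_even_1)
  moreover have "h (transpose s t) = - bilin_A_BA_pow n v w (\<beta> + \<alpha>)"
    unfolding h_eq Q_term_def bilin_A_BA_pow_def sum_row_A_row[symmetric] using st
    by (simp add: I sign_swap_id of_even_uminus of_even_1 sum_negf mult.commute[of "row_AB_pow n w \<alpha> _"])
  ultimately show ?thesis
    unfolding Q_eq using bilin_A_BA_pow_swap[of n v w "\<beta> + \<alpha>"] by (simp add: add.commute)
qed

lemma sum_fun_upd_add:
  assumes "finite P" "c \<in> P"
  shows "sum (p(c := p c + x)) P = sum p P + (x::nat)"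
  using assms by (simp add: sum.remove)

lemma closed_form_coeff_Suc:
  "(-1::int) ^ Suc k * fact (Suc k + 1) * 2 = - (int k + 2) * ((-1) ^ k * fact (k + 1) * 2)"
  by (simp add: fact_Suc algebra_simps)

lemma Q_weighted_closed_form:
  assumes "finite P" "s \<noteq> t" "s \<notin> P" "t \<notin> P" "\<forall>k\<in>P. 0 < p k"
  shows "Q_weighted n w v s t P p \<alpha> \<beta>
    = of_int ((-1) ^ card P * fact (card P + 1) * 2) * bilin_A_BA_pow n w v (\<alpha> + \<beta> + sum p P)"
  using assms
proof (induction P arbitrary: p \<alpha> \<beta> rule: finite_induct)
  case empty
  then show ?case using Q_weighted_empty[of s t n w v p \<alpha> \<beta>] by (simp add: mult_2)
next
  case (insert m P)
  note fP = insert.hyps(1) and mP = insert.hyps(2)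
  have st: "s \<noteq> t" and sP: "s \<notin> P" and tP: "t \<notin> P" and ms: "m \<noteq> s" and mt: "m \<noteq> t"
    and pos: "\<forall>k\<in>P. 0 < p k" and pm: "0 < p m"
    using insert.prems by auto
  define K :: int where "K = (-1) ^ card P * fact (card P + 1) * 2"
  define F where "F = bilin_A_BA_pow n w v (\<alpha> + \<beta> + sum p (insert m P))"
  have IH: "Q_weighted n w v s t P p' \<alpha>' \<beta>' = of_int K * bilin_A_BA_pow n w v (\<alpha>' + \<beta>' + sum p' P)"
    if "\<forall>k\<in>P. 0 < p' k" for p' \<alpha>' \<beta>'
    unfolding K_def using insert.IH st sP tP that by blast
  have "Q_weighted n w v s t P (p(c := p c + p m)) \<alpha> \<beta> = of_int K * F" if c: "c \<in> P" for c
  proof -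
    have "\<forall>k\<in>P. 0 < (p(c := p c + p m)) k" using pos by auto
    from IH[OF this] show ?thesis
      by (simp only: sum_fun_upd_add[OF fP c] F_def sum.insert[OF fP mP] add_ac)
  qed
  moreover have "Q_weighted n w v s t P p (\<alpha> + p m) \<beta> = of_int K * F"
    and "Q_weighted n w v s t P p \<alpha> (\<beta> + p m) = of_int K * F"
    using IH[OF pos] by (simp_all add: F_def sum.insert[OF fP mP] add_ac)
  ultimately have "Q_weighted n w v s t (insert m P) p \<alpha> \<beta>
      = - (of_int K * F) - of_int K * F - (\<Sum>c\<in>P. of_int K * F)"
    by (simp add: Q_weighted_insert[where p=p, OF fP st sP tP mP ms mt pm])
  also have "(\<Sum>c\<in>P. of_int K * F) = of_int (int (card P) * K) * F"
    by (simp add: of_int_mult mult.assoc)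
  also have "- (of_int K * F) - of_int K * F - of_int (int (card P) * K) * F
      = of_int (- K - K - int (card P) * K) * F"
    by (simp only: of_int_diff of_int_minus left_diff_distrib mult_minus_left)
  also have "- K - K - int (card P) * K = - (int (card P) + 2) * K"
    by algebra
  finally show ?case
    unfolding card_insert_disjoint[OF fP mP] closed_form_coeff_Suc by (simp only: K_def F_def)
qed

section \<open>Vanishing of both sides\<close>

lemma bilin_A_BA_pow_eq_0:
  assumes "n \<ge> 1"
  shows "bilin_A_BA_pow n w v (n - 1) = 0"
proof -
  define P where "P = {1..n - 1}"
  have P: "finite P" "n \<notin> P" "n + 1 \<notin> P" "card P = n - 1"
    using assms by (auto simp: P_def)
  define K :: int where "K = (-1) ^ card P * fact (card P + 1) * 2"
  have "K \<noteq> 0" by (simp add: K_def)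
  have "of_int K * bilin_A_BA_pow n w v (n - 1) = Q_weighted n w v n (n + 1) P (\<lambda>_. 1) 0 0"
    using Q_weighted_closed_form[of P n "n + 1" "\<lambda>_. 1"] P by (simp add: K_def)
  also have "\<dots> = 0"
    by (rule Q_weighted_eq_0_if_large) (use P assms in auto)
  finally have "scalar (1 / of_int K) * (of_int K * bilin_A_BA_pow n w v (n - 1)) = 0"
    by simp
  moreover have "scalar (1 / of_int K) * of_int K = 1"
    using \<open>K \<noteq> 0\<close> by (simp flip: scalar_of_int scalar_mult add: scalar_1)
  ultimately show ?thesis by (simp flip: mult.assoc)
qed

lemma Qsum_eq_0: "Qsum n v w = ext_zero"
proof -
  define H where "H i j = scalar (w (j n) * v (j (n + 1))) *
     (prod_list (map (\<lambda>k. matAB n (i k) (j k)) [1..<n]) * matA (i n) (i (n + 1)))"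
    for i j :: "nat \<Rightarrow> nat"
  have gen_AB: "mat_mul n gen_a gen_b = (\<lambda>i j. coeffs (matAB n i j))"
    unfolding coeffs_matA[symmetric] coeffs_matB[symmetric] coeffs_gmat_mul matAB_def ..
  have summand: "ext_scale (of_int (sign \<sigma>) * w (i (\<sigma> n)) * v (i (\<sigma> (n + 1))))
      (ext_prod_list (map (\<lambda>k. coeffs (matAB n (i k) (i (\<sigma> k)))) [1..<n]) \<odot> gen_a (i n) (i (n + 1)))
      = coeffs (of_int (sign \<sigma>) * H i (i \<circ> \<sigma>))" for \<sigma> i
    by (simp add: H_def coeffs_prod_list coeffs_matA[symmetric] coeffs_times[symmetric]
        coeffs_scalar_mult[symmetric] scalar_mult scalar_of_int mult.assoc)
  have "Qsum n v w = coeffs (\<Sum>\<sigma>\<in>{\<sigma>. \<sigma> permutes {1..n+1}}. \<Sum>i\<in>PiE {1..n+1} (\<lambda>_. {1..n}).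
        of_int (sign \<sigma>) * H i (i \<circ> \<sigma>))"
    unfolding Qsum_def gen_AB summand
    by (simp add: coeffs_sum finite_permutations finite_PiE)
  also have "\<dots> = coeffs 0"
    by (subst alternating_sum_eq_0) simp_all
  finally show ?thesis by (simp add: zero_exterior.rep_eq)
qed

theorem proposition5p6:
  fixes n :: nat and v w :: "nat \<Rightarrow> complex"
  assumes "n \<ge> 1"
  shows "Qsum n v w =
    ext_scale ((-1) ^ (n - 1) * 2 * of_nat (fact (n - 1)))
      (bil n w (mat_mul n gen_a (mat_pow n (mat_mul n gen_b gen_a) (n - 1))) v)"
proof -
  have "mat_mul n gen_a (mat_pow n (mat_mul n gen_b gen_a) (n - 1))
      = (\<lambda>i j. coeffs (matA_BA_pow n (n - 1) i j))"
    unfolding coeffs_matA[symmetric] coeffs_matB[symmetric] coeffs_gmat_mul coeffs_gmat_pow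
      matA_BA_pow_def matBA_def ..
  then have "bil n w (mat_mul n gen_a (mat_pow n (mat_mul n gen_b gen_a) (n - 1))) v
      = coeffs (bilin_A_BA_pow n w v (n - 1))"
    by (simp add: bil_def bilin_A_BA_pow_def coeffs_sum coeffs_scalar_mult[symmetric]
        sum.cartesian_product case_prod_unfold)
  then show ?thesis
    using bilin_A_BA_pow_eq_0[OF assms] Qsum_eq_0
    by (simp add: zero_exterior.rep_eq ext_scale_def ext_zero_def)
qed

end
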